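(* There exist unit vectors $\psi_1, \psi_2, \psi_3, \psi_4 \in \mathbb{C}^4$ such that $|\langle \psi_i, \psi_j\rangle| \le \tfrac{2}{3}$ for all $i \ne j$, and yet the set $\{\psi_1\psi_1^*, \psi_2\psi_2^*, \psi_3\psi_3^*, \psi_4\psi_4^*\}$ of rank-one density matrices is not antidistinguishable. Consequently, the statement "for every $d\ge 2$, any $d$ unit vectors in $\mathbb{C}^d$ with pairwise inner products of absolute value at most $(d-2)/(d-1)$ form an antidistinguishable set" is false (it fails for $d=4$).
   Context: A density matrix on $\mathbb{C}^d$ is a positive semidefinite $d\times d$ complex matrix of trace $1$. A set of density matrices $\{\rho_1,\ldots,\rho_n\}$ on $\mathbb{C}^d$ is called antidistinguishable if there exist positive semidefinite $d\times d$ matrices $N_1,\ldots,N_n$ with $\sum_{i=1}^n N_i = I$ (the identity) and $\operatorname{Tr}(N_i \rho_i) = 0$ for every $i \in \{1,\ldots,n\}$. For a unit vector $\psi$, $\psi\psi^*$ denotes the rank-one projection onto $\psi$, and $\langle \cdot,\cdot\rangle$ is the standard inner product on $\mathbb{C}^4$. *)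

theory Defs
  imports "HOL-Analysis.Analysis"
begin

definition cinner :: "complex^'d \<Rightarrow> complex^'d \<Rightarrow> complex" where
  "cinner x y = (\<Sum>i\<in>UNIV. x$i * cnj (y$i))"

definition cadjoint :: "complex^'d^'d \<Rightarrow> complex^'d^'d" where
  "cadjoint A = (\<chi> i j. cnj (A$j$i))"

definition ctrace :: "complex^'d^'d \<Rightarrow> complex" where
  "ctrace A = (\<Sum>i\<in>UNIV. A$i$i)"

definition psd :: "complex^'d^'d \<Rightarrow> bool" where
  "psd A \<longleftrightarrow> cadjoint A = A \<and> (\<forall>v. 0 \<le> Re (cinner (A *v v) v))"

definition density_matrix :: "complex^'d^'d \<Rightarrow> bool" where
  "density_matrix \<rho> \<longleftrightarrow> psd \<rho> \<and> ctrace \<rho> = 1"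

definition proj :: "complex^'d \<Rightarrow> complex^'d^'d" where
  "proj \<psi> = (\<chi> i j. \<psi>$i * cnj (\<psi>$j))"

definition antidistinguishable :: "nat \<Rightarrow> (nat \<Rightarrow> complex^'d^'d) \<Rightarrow> bool" where
  "antidistinguishable n \<rho> \<longleftrightarrow>
     (\<exists>N :: nat \<Rightarrow> complex^'d^'d.
        (\<forall>i\<in>{1..n}. psd (N i)) \<and>
        (\<Sum>i=1..n. N i) = mat 1 \<and>
        (\<forall>i\<in>{1..n}. ctrace (N i ** \<rho> i) = 0))"

end

theory Submission
  imports Defs
begin

text \<open>The four states are \<open>(22, 0, 7\<omega>\<^sup>2, 14\<omega>) / 27\<close> for \<open>\<omega>\<close> ranging over the fourth roots
  of unity; their overlaps are \<open>(484 + 196\<zeta> + 49\<zeta>\<^sup>2) / 729\<close> with \<open>\<zeta> \<in> {\<i>, -1, -\<i>}\<close>, of modulus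
  at most 2/3. Antidistinguishability fails by weak duality for the underlying semidefinite
  program: for \<open>Y = diag (22, 0, -7, -14) / 729\<close>, which has positive trace, each \<open>\<psi>\<psi>\<^sup>* - Y\<close> is a
  nonnegative combination of rank-one projections, so \<open>Tr (N Y) \<le> Tr (N \<psi>\<psi>\<^sup>* )\<close> for every psd
  \<open>N\<close>; a measurement with \<open>Tr (N\<^sub>i \<psi>\<^sub>i\<psi>\<^sub>i\<^sup>* ) = 0\<close> would then give
  \<open>Tr Y = \<Sum>\<^sub>i Tr (N\<^sub>i Y) \<le> 0\<close>.\<close>

lemma ctrace_add: "ctrace (A + B) = ctrace A + ctrace B"
  unfolding ctrace_def by (simp add: sum.distrib)

lemma ctrace_scaleR: "ctrace (r *\<^sub>R A) = r *\<^sub>R ctrace A"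
  unfolding ctrace_def by (simp add: scaleR_sum_right)

lemma matrix_mult_scaleR_right:
  fixes A B :: "'a::real_algebra_1^'n^'n"
  shows "A ** (r *\<^sub>R B) = r *\<^sub>R (A ** B)"
  unfolding matrix_matrix_mult_def by (simp add: vec_eq_iff scaleR_sum_right)

lemma ctrace_mult_sum_left:
  "ctrace ((\<Sum>i\<in>I. N i) ** Y) = (\<Sum>i\<in>I. ctrace (N i ** Y))"
  unfolding ctrace_def matrix_matrix_mult_def
  by (simp add: sum_component sum_distrib_right sum.swap[of _ UNIV I])

lemma ctrace_mult_proj: "ctrace (N ** proj v) = cinner (N *v v) v"
  unfolding ctrace_def proj_def cinner_def matrix_matrix_mult_def matrix_vector_mult_def
  by (simp add: sum_distrib_right mult.assoc)

lemma psd_ctrace_mult_proj_nonneg: "psd N \<Longrightarrow> 0 \<le> Re (ctrace (N ** proj v))"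
  unfolding ctrace_mult_proj psd_def by blast

lemma ctrace_mult_add_proj_ge:
  assumes "psd N" and "0 \<le> a"
  shows "Re (ctrace (N ** A)) \<le> Re (ctrace (N ** (A + a *\<^sub>R proj v)))"
  using psd_ctrace_mult_proj_nonneg[OF \<open>psd N\<close>, of v] \<open>0 \<le> a\<close>
  by (simp add: matrix_add_ldistrib matrix_mult_scaleR_right ctrace_add ctrace_scaleR)

lemma cinner_proj: "cinner (proj v *v w) w = cnj (cinner v w) * cinner v w"
  unfolding cinner_def proj_def matrix_vector_mult_def
  by (simp add: sum_distrib_left sum_distrib_right mult_ac) (rule sum.swap)

lemma psd_proj: "psd (proj v)"
proof -
  have "cadjoint (proj v) = proj v"
    unfolding cadjoint_def proj_def by (simp add: vec_eq_iff mult.commute)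
  moreover have "0 \<le> Re (cinner (proj v *v w) w)" for w
    unfolding cinner_proj by (simp add: mult.commute[of "cnj _"] complex_mult_cnj)
  ultimately show ?thesis unfolding psd_def by blast
qed

lemma ctrace_proj: "ctrace (proj v) = of_real ((norm v)\<^sup>2)"
proof -
  have "ctrace (proj v) = (\<Sum>i\<in>UNIV. of_real ((norm (v$i))\<^sup>2))"
    unfolding ctrace_def proj_def by (simp only: vec_lambda_beta complex_norm_square)
  also have "\<dots> = of_real ((norm v)\<^sup>2)"
    unfolding norm_vec_def L2_set_def of_real_sum[symmetric]
    by (simp only: real_sqrt_pow2 sum_nonneg zero_le_power2)
  finally show ?thesis .
qed

lemma density_matrix_proj: "norm v = 1 \<Longrightarrow> density_matrix (proj v)"
  unfolding density_matrix_def by (simp add: psd_proj ctrace_proj)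

lemma not_antidistinguishable_by_dual_witness:
  fixes \<rho> :: "nat \<Rightarrow> complex^'d^'d" and Y :: "complex^'d^'d"
  assumes below: "\<And>i N. i \<in> {1..n} \<Longrightarrow> psd N \<Longrightarrow> Re (ctrace (N ** Y)) \<le> Re (ctrace (N ** \<rho> i))"
    and trace_pos: "0 < Re (ctrace Y)"
  shows "\<not> antidistinguishable n \<rho>"
proof
  assume "antidistinguishable n \<rho>"
  then obtain N :: "nat \<Rightarrow> complex^'d^'d" where
    psd_N: "\<forall>i\<in>{1..n}. psd (N i)" and sum_N: "(\<Sum>i=1..n. N i) = mat 1"
    and orth: "\<forall>i\<in>{1..n}. ctrace (N i ** \<rho> i) = 0"
    unfolding antidistinguishable_def by blast
  have "ctrace Y = ctrace ((\<Sum>i=1..n. N i) ** Y)"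
    unfolding sum_N by simp
  then have "ctrace Y = (\<Sum>i=1..n. ctrace (N i ** Y))"
    by (simp only: ctrace_mult_sum_left)
  then have "Re (ctrace Y) = (\<Sum>i=1..n. Re (ctrace (N i ** Y)))"
    by simp
  also have "\<dots> \<le> (\<Sum>i=1..n. Re (ctrace (N i ** \<rho> i)))"
    using below psd_N by (intro sum_mono) blast
  also have "\<dots> = 0"
    using orth by simp
  finally show False
    using trace_pos by linarith
qed

definition vec4 :: "'a \<Rightarrow> 'a \<Rightarrow> 'a \<Rightarrow> 'a \<Rightarrow> 'a^4" where
  "vec4 a b c d = (\<chi> k. if k = 1 then a else if k = 2 then b else if k = 3 then c else d)"

lemma vec4_nth [simp]:
  "vec4 a b c d $ 1 = a" "vec4 a b c d $ 2 = b" "vec4 a b c d $ 3 = c" "vec4 a b c d $ 4 = d"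
  by (simp_all add: vec4_def)

definition tetra_state :: "complex \<Rightarrow> complex^4" where
  "tetra_state \<omega> = vec4 (22/27) 0 (7/27 * \<omega>\<^sup>2) (14/27 * \<omega>)"

definition dual_witness :: "complex^4^4" where
  "dual_witness = (\<chi> a b. if a = b then vec4 22 0 (-7) (-14) $ a / 729 else 0)"

definition slack_vec_1 :: "complex \<Rightarrow> complex^4" where
  "slack_vec_1 \<omega> = vec4 11 0 (4 * \<omega>\<^sup>2) (7 * \<omega>)"

definition slack_vec_2 :: "complex \<Rightarrow> complex^4" where
  "slack_vec_2 \<omega> = vec4 1 0 0 \<omega>"

lemma cnj_eq_inverse_if_cmod_1:
  assumes "cmod \<omega> = 1"
  shows "cnj \<omega> = inverse \<omega>"
proof -
  have "\<omega> * cnj \<omega> = 1"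
    by (simp only: complex_norm_square[symmetric] assms) simp
  then show ?thesis
    by (rule inverse_unique[symmetric])
qed

lemma proj_tetra_state:
  assumes "cmod \<omega> = 1"
  shows "proj (tetra_state \<omega>)
           = dual_witness + (7/1458) *\<^sub>R proj (slack_vec_1 \<omega>) + (77/1458) *\<^sub>R proj (slack_vec_2 \<omega>)"
proof -
  have "\<omega> \<noteq> 0" using assms by auto
  then show ?thesis
    unfolding vec_eq_iff forall_4 vector_add_component vector_scaleR_component
    by (simp add: tetra_state_def dual_witness_def slack_vec_1_def slack_vec_2_def proj_def
        cnj_eq_inverse_if_cmod_1[OF assms] scaleR_conv_of_real field_simps)
qed

lemma dual_witness_below_tetra_state:
  assumes "cmod \<omega> = 1" and "psd N"
  shows "Re (ctrace (N ** dual_witness)) \<le> Re (ctrace (N ** proj (tetra_state \<omega>)))"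
proof -
  have "Re (ctrace (N ** dual_witness))
          \<le> Re (ctrace (N ** (dual_witness + (7/1458) *\<^sub>R proj (slack_vec_1 \<omega>))))"
    using assms(2) by (rule ctrace_mult_add_proj_ge) simp
  also have "\<dots> \<le> Re (ctrace (N ** proj (tetra_state \<omega>)))"
    unfolding proj_tetra_state[OF assms(1)]
    using assms(2) by (rule ctrace_mult_add_proj_ge) simp
  finally show ?thesis .
qed

lemma Re_ctrace_dual_witness: "Re (ctrace dual_witness) = 1/729"
  by (simp add: ctrace_def dual_witness_def sum_4)

lemma norm_tetra_state: "cmod \<omega> = 1 \<Longrightarrow> norm (tetra_state \<omega>) = 1"
  unfolding norm_vec_def L2_set_def
  by (simp add: tetra_state_def sum_4 norm_mult norm_power power_divide)

lemma cinner_tetra_state: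
  "cinner (tetra_state \<omega>) (tetra_state \<eta>) = (484 + 196 * (\<omega> * cnj \<eta>) + 49 * (\<omega> * cnj \<eta>)\<^sup>2) / 729"
  unfolding cinner_def by (simp add: tetra_state_def sum_4 field_simps power2_eq_square)

lemma cmod_tetra_overlap_le:
  assumes "\<zeta> \<in> {\<i>, -1, -\<i>}"
  shows "cmod ((484 + 196 * \<zeta> + 49 * \<zeta>\<^sup>2) / 729) \<le> 2/3"
proof (rule power2_le_imp_le)
  show "(cmod ((484 + 196 * \<zeta> + 49 * \<zeta>\<^sup>2) / 729))\<^sup>2 \<le> (2/3)\<^sup>2"
    using assms by (auto simp: cmod_def power2_eq_square)
qed simp

lemma i_power_mult_cnj_i_power:
  assumes "j \<in> {1..4}" "k \<in> {1..4}" "j \<noteq> k"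
  shows "\<i> ^ j * cnj (\<i> ^ k) \<in> {\<i>, -1, -\<i>}"
proof -
  have "j \<in> {1, 2, 3, 4}" "k \<in> {1, 2, 3, 4}" using assms(1,2) by auto
  then show ?thesis using assms(3) by (auto simp: eval_nat_numeral)
qed

theorem mainTheorem2:
  shows "\<exists>\<psi> :: nat \<Rightarrow> complex^4.
           (\<forall>i\<in>{1..4}. norm (\<psi> i) = 1) \<and>
           (\<forall>i\<in>{1..4}. \<forall>j\<in>{1..4}. i \<noteq> j \<longrightarrow> cmod (cinner (\<psi> i) (\<psi> j)) \<le> 2/3) \<and>
           (\<forall>i\<in>{1..4}. density_matrix (proj (\<psi> i))) \<and>
           \<not> antidistinguishable 4 (\<lambda>i. proj (\<psi> i))"
proof (intro exI[of _ "\<lambda>j. tetra_state (\<i> ^ j)"] conjI ballI impI)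
  have unit: "cmod (\<i> ^ j) = 1" for j :: nat
    by (simp add: norm_power)
  show "norm (tetra_state (\<i> ^ i)) = 1" for i :: nat
    using unit by (rule norm_tetra_state)
  then show "density_matrix (proj (tetra_state (\<i> ^ i)))" for i :: nat
    by (rule density_matrix_proj)
  show "cmod (cinner (tetra_state (\<i> ^ j)) (tetra_state (\<i> ^ k))) \<le> 2/3"
    if "j \<in> {1..4}" "k \<in> {1..4}" "j \<noteq> k" for j k :: nat
    unfolding cinner_tetra_state
    using i_power_mult_cnj_i_power[OF that] by (rule cmod_tetra_overlap_le)
  show "\<not> antidistinguishable 4 (\<lambda>j. proj (tetra_state (\<i> ^ j)))"
    by (rule not_antidistinguishable_by_dual_witness[where Y = dual_witness])
      (simp_all add: dual_witness_below_tetra_state unit Re_ctrace_dual_witness)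
qed

end
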